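(* Under the standing setup with $\mathrm{Var}(X_N)>0$: (i) if $\delta_W\ge 0$, then $D\in[D^-_{MOB},\min\{D^+_{MOB},D_{ER}\}]$; (ii) if $\delta_W\le 0$, then $D\in[\max\{D^-_{MOB},D_{ER}\},D^+_{MOB}]$; (iii) the bounds in (i) and (ii) are sharp under the respective sign assumption (absent additional information).
   Context: Let $(X,Y,N)$ be a random triple with $X\in\{0,1\}$, $Y$ real-valued, $N$ taking values in a finite set $\mathcal N$. Write $p_n=\Pr(N=n)$, $X_n=\mathbb E[X\mid N=n]$, $Y_n=\mathbb E[Y\mid N=n]$, $X_N=\mathbb E[X\mid N]$, $Y_N=\mathbb E[Y\mid N]$. Assume some $n$ has $p_n>0$ and $X_n\in(0,1)$, and fix reals $\underline Y\le\overline Y$ with $\mathbb E[Y\mid X=x,N=n]\in[\underline Y,\overline Y]$ whenever $\Pr(X=x,N=n)>0$. $D=\mathbb E[Y\mid X=1]-\mathbb E[Y\mid X=0]$; $\delta_W=\mathbb E[\mathrm{Cov}(Y,X_N\mid X)]$; $D_{ER}=\mathrm{Cov}(Y_N,X_N)/\mathrm{Var}(X_N)$; $D^+_{MOB}=\big(\mathbb E[\min\{Y_N-\underline Y(1-X_N),\overline Y X_N\}]-\mathbb E[X]\mathbb E[Y]\big)/\mathrm{Var}(X)$, $D^-_{MOB}=\big(\mathbb E[Y](1-\mathbb E[X])-\mathbb E[\min\{Y_N-\underline Y X_N,\overline Y(1-X_N)\}]\big)/\mathrm{Var}(X)$. Sharpness under an assumption $\mathcal A$: the parameter lies in the interval for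 every joint distribution satisfying the standing assumptions and $\mathcal A$, and every value in the interval is attained by some joint distribution of $(X,Y,N)$ with the same observed $(p_n,X_n,Y_n)_n$, satisfying the standing bound and $\mathcal A$. *)

theory Defs
  imports "HOL-Probability.Probability"
begin

definition ev :: "'a measure \<Rightarrow> ('a \<Rightarrow> 'b) \<Rightarrow> 'b \<Rightarrow> 'a set" where
  "ev M Z z = {\<omega> \<in> space M. Z \<omega> = z}"

definition ev2 :: "'a measure \<Rightarrow> ('a \<Rightarrow> real) \<Rightarrow> ('a \<Rightarrow> 'n) \<Rightarrow> real \<Rightarrow> 'n \<Rightarrow> 'a set" where
  "ev2 M X N x n = {\<omega> \<in> space M. X \<omega> = x \<and> N \<omega> = n}"

definition condE :: "'a measure \<Rightarrow> ('a \<Rightarrow> real) \<Rightarrow> 'a set \<Rightarrow> real" where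
  "condE M f A = (\<integral>\<omega>. indicator A \<omega> * f \<omega> \<partial>M) / measure M A"

definition expect :: "'a measure \<Rightarrow> ('a \<Rightarrow> real) \<Rightarrow> real" where
  "expect M f = (\<integral>\<omega>. f \<omega> \<partial>M)"

definition var :: "'a measure \<Rightarrow> ('a \<Rightarrow> real) \<Rightarrow> real" where
  "var M f = expect M (\<lambda>\<omega>. (f \<omega> - expect M f)\<^sup>2)"

definition cov :: "'a measure \<Rightarrow> ('a \<Rightarrow> real) \<Rightarrow> ('a \<Rightarrow> real) \<Rightarrow> real" where
  "cov M f g = expect M (\<lambda>\<omega>. (f \<omega> - expect M f) * (g \<omega> - expect M g))"

definition condCov :: "'a measure \<Rightarrow> ('a \<Rightarrow> real) \<Rightarrow> ('a \<Rightarrow> real) \<Rightarrow> 'a set \<Rightarrow> real" where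
  "condCov M f g A = condE M (\<lambda>\<omega>. f \<omega> * g \<omega>) A - condE M f A * condE M g A"

definition pN :: "'a measure \<Rightarrow> ('a \<Rightarrow> 'n) \<Rightarrow> 'n \<Rightarrow> real" where
  "pN M N n = measure M (ev M N n)"

definition cN :: "'a measure \<Rightarrow> ('a \<Rightarrow> real) \<Rightarrow> ('a \<Rightarrow> 'n) \<Rightarrow> 'n \<Rightarrow> real" where
  "cN M Z N n = condE M Z (ev M N n)"

definition rvN :: "'a measure \<Rightarrow> ('a \<Rightarrow> real) \<Rightarrow> ('a \<Rightarrow> 'n) \<Rightarrow> 'a \<Rightarrow> real" where
  "rvN M Z N \<omega> = cN M Z N (N \<omega>)"

definition standing :: "'a measure \<Rightarrow> ('a \<Rightarrow> real) \<Rightarrow> ('a \<Rightarrow> real) \<Rightarrow> ('a \<Rightarrow> 'n::finite)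
    \<Rightarrow> real \<Rightarrow> real \<Rightarrow> bool" where
  "standing M X Y N ylo yhi \<longleftrightarrow>
     prob_space M \<and>
     X \<in> borel_measurable M \<and> (\<forall>\<omega>\<in>space M. X \<omega> \<in> {0, 1}) \<and>
     Y \<in> borel_measurable M \<and> integrable M Y \<and>
     N \<in> measurable M (count_space UNIV) \<and>
     (\<exists>n. pN M N n > 0 \<and> 0 < cN M X N n \<and> cN M X N n < 1) \<and>
     ylo \<le> yhi \<and>
     (\<forall>x\<in>{0, 1}. \<forall>n. measure M (ev2 M X N x n) > 0 \<longrightarrow>
         condE M Y (ev2 M X N x n) \<in> {ylo..yhi})"

definition same_obs :: "'a measure \<Rightarrow> ('a \<Rightarrow> real) \<Rightarrow> ('a \<Rightarrow> real) \<Rightarrow> ('a \<Rightarrow> 'n)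
   \<Rightarrow> 'b measure \<Rightarrow> ('b \<Rightarrow> real) \<Rightarrow> ('b \<Rightarrow> real) \<Rightarrow> ('b \<Rightarrow> 'n) \<Rightarrow> bool" where
  "same_obs M X Y N M' X' Y' N' \<longleftrightarrow>
     (\<forall>n. pN M' N' n = pN M N n \<and> cN M' X' N' n = cN M X N n \<and> cN M' Y' N' n = cN M Y N n)"

definition Dpar :: "'a measure \<Rightarrow> ('a \<Rightarrow> real) \<Rightarrow> ('a \<Rightarrow> real) \<Rightarrow> real" where
  "Dpar M X Y = condE M Y (ev M X 1) - condE M Y (ev M X 0)"

text \<open>delta_W = E[Cov(Y, X_N | X)] = sum over x of P(X=x) Cov(Y, X_N | X = x)\<close>
definition deltaW :: "'a measure \<Rightarrow> ('a \<Rightarrow> real) \<Rightarrow> ('a \<Rightarrow> real) \<Rightarrow> ('a \<Rightarrow> 'n) \<Rightarrow> real" where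
  "deltaW M X Y N = (\<Sum>x\<in>{0, 1::real}. measure M (ev M X x) * condCov M Y (rvN M X N) (ev M X x))"

definition D_ER :: "'a measure \<Rightarrow> ('a \<Rightarrow> real) \<Rightarrow> ('a \<Rightarrow> real) \<Rightarrow> ('a \<Rightarrow> 'n) \<Rightarrow> real" where
  "D_ER M X Y N = cov M (rvN M Y N) (rvN M X N) / var M (rvN M X N)"

definition D_MOB_plus :: "'a measure \<Rightarrow> ('a \<Rightarrow> real) \<Rightarrow> ('a \<Rightarrow> real) \<Rightarrow> ('a \<Rightarrow> 'n)
    \<Rightarrow> real \<Rightarrow> real \<Rightarrow> real" where
  "D_MOB_plus M X Y N ylo yhi =
     (expect M (\<lambda>\<omega>. min (rvN M Y N \<omega> - ylo * (1 - rvN M X N \<omega>)) (yhi * rvN M X N \<omega>))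
       - expect M X * expect M Y) / var M X"

definition D_MOB_minus :: "'a measure \<Rightarrow> ('a \<Rightarrow> real) \<Rightarrow> ('a \<Rightarrow> real) \<Rightarrow> ('a \<Rightarrow> 'n)
    \<Rightarrow> real \<Rightarrow> real \<Rightarrow> real" where
  "D_MOB_minus M X Y N ylo yhi =
     (expect M Y * (1 - expect M X)
       - expect M (\<lambda>\<omega>. min (rvN M Y N \<omega> - ylo * rvN M X N \<omega>) (yhi * (1 - rvN M X N \<omega>))))
     / var M X"

end

theory Submission
  imports Defs
begin

text \<open>Everything is computed on the cells \<open>{X = x, N = n}\<close>. Write \<open>q x n = P(X = x, N = n)\<close>
and \<open>s x n = E[Y; X = x, N = n]\<close>: the observables determine \<open>q\<close> and \<open>s 0 n + s 1 n\<close>, and the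
bound hypothesis says \<open>ylo * q x n \<le> s x n \<le> yhi * q x n\<close>. Then
\<open>D = ((\<Sum>n. s 1 n) - E X * E Y) / Var X\<close>, and \<open>D^+_MOB\<close>, \<open>D^-_MOB\<close> are the same expression with
each \<open>s 1 n\<close> replaced by its largest resp. smallest admissible value. This gives the MOB bounds,
and every intermediate value of \<open>\<Sum>n. s 1 n\<close> is realised by a model in which \<open>Y\<close> is a
deterministic function of \<open>(X, N)\<close>. Finally \<open>\<delta>_W = Cov(Y_N, X_N) - D * Var(X_N)\<close>, where
\<open>Cov(Y_N, X_N)\<close> and \<open>Var(X_N)\<close> are observable; so the sign of \<open>\<delta>_W\<close> decides on which side of
\<open>D_ER = Cov(Y_N, X_N) / Var(X_N)\<close> the parameter lies, both in the data and in each such model.\<close>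

definition cell_prob :: "'a measure \<Rightarrow> ('a \<Rightarrow> real) \<Rightarrow> ('a \<Rightarrow> 'n) \<Rightarrow> real \<Rightarrow> 'n \<Rightarrow> real" where
  "cell_prob M X N x n = measure M (ev2 M X N x n)"

definition cell_integral ::
    "'a measure \<Rightarrow> ('a \<Rightarrow> real) \<Rightarrow> ('a \<Rightarrow> real) \<Rightarrow> ('a \<Rightarrow> 'n) \<Rightarrow> real \<Rightarrow> 'n \<Rightarrow> real" where
  "cell_integral M X Z N x n = (\<integral>\<omega>. indicator (ev2 M X N x n) \<omega> * Z \<omega> \<partial>M)"

lemma (in finite_measure) condE_mult_measure:
  assumes "A \<in> sets M"
  shows "condE M f A * measure M A = (\<integral>\<omega>. indicator A \<omega> * f \<omega> \<partial>M)"
proof (cases "measure M A = 0")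
  case True
  then have "AE \<omega> in M. indicator A \<omega> * f \<omega> = 0"
    using AE_not_in[of A M] assms by (auto simp: null_sets_def emeasure_eq_measure elim: eventually_mono)
  then show ?thesis
    using True by (simp add: integral_eq_zero_AE)
qed (simp add: condE_def)

lemma sum_weighted_covariance:
  fixes f g w :: "'i \<Rightarrow> real"
  assumes "sum w A = 1" "(\<Sum>i\<in>A. f i * w i) = F" "(\<Sum>i\<in>A. g i * w i) = G"
  shows "(\<Sum>i\<in>A. (f i - F) * (g i - G) * w i) = (\<Sum>i\<in>A. f i * g i * w i) - F * G"
proof -
  have "(\<Sum>i\<in>A. (f i - F) * (g i - G) * w i)
      = (\<Sum>i\<in>A. f i * g i * w i - G * (f i * w i) - F * (g i * w i) + F * G * w i)"
    by (rule sum.cong) (simp_all add: algebra_simps)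
  also have "\<dots> = (\<Sum>i\<in>A. f i * g i * w i) - G * F - F * G + F * G * sum w A"
    using assms(2,3) by (simp add: sum.distrib sum_subtractf sum_distrib_left[symmetric])
  finally show ?thesis using assms(1) by simp
qed

lemma sum_interpolate:
  fixes l u :: "'i \<Rightarrow> real"
  assumes "\<And>i. i \<in> A \<Longrightarrow> l i \<le> u i" "sum l A \<le> T" "T \<le> sum u A"
  obtains w where "\<And>i. i \<in> A \<Longrightarrow> l i \<le> w i \<and> w i \<le> u i" "sum w A = T"
proof
  define t where "t = (if sum u A = sum l A then 0 else (T - sum l A) / (sum u A - sum l A))"
  have t: "0 \<le> t" "t \<le> 1"
    using assms(2,3) by (auto simp: t_def divide_le_eq)
  show "l i \<le> l i + t * (u i - l i) \<and> l i + t * (u i - l i) \<le> u i" if "i \<in> A" for i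
    using t assms(1)[OF that] mult_left_le_one_le[of "u i - l i" t] by auto
  show "(\<Sum>i\<in>A. l i + t * (u i - l i)) = T"
    using assms(2,3) by (auto simp: t_def sum.distrib sum_subtractf sum_distrib_left[symmetric])
qed

abbreviation canonical_space :: "(real \<times> real \<times> 'n) measure" where
  "canonical_space \<equiv> borel \<Otimes>\<^sub>M borel \<Otimes>\<^sub>M count_space UNIV"

text \<open>\<open>coord_X\<close> is clipped to \<open>{0, 1}\<close> because a model must be binary on the whole space.\<close>

definition coord_X :: "real \<times> real \<times> 'n \<Rightarrow> real" where
  "coord_X v = (if fst v = 1 then 1 else 0)"

definition coord_Y :: "real \<times> real \<times> 'n \<Rightarrow> real" where
  "coord_Y v = fst (snd v)"

definition coord_N :: "real \<times> real \<times> 'n \<Rightarrow> 'n" where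
  "coord_N v = snd (snd v)"

lemma coords_measurable [measurable]:
  "coord_X \<in> borel_measurable canonical_space" "coord_Y \<in> borel_measurable canonical_space"
  "coord_N \<in> measurable canonical_space (count_space UNIV)"
  unfolding coord_X_def coord_Y_def coord_N_def by measurable

locale binary_triple = prob_space M for M :: "'a measure" +
  fixes X Y :: "'a \<Rightarrow> real" and N :: "'a \<Rightarrow> 'n::finite"
  assumes X_measurable [measurable]: "X \<in> borel_measurable M"
    and X_binary: "\<omega> \<in> space M \<Longrightarrow> X \<omega> = 0 \<or> X \<omega> = 1"
    and Y_integrable: "integrable M Y"
    and N_measurable [measurable]: "N \<in> measurable M (count_space UNIV)"
begin

abbreviation "q \<equiv> cell_prob M X N"
abbreviation "s \<equiv> cell_integral M X Y N"

lemma cell_sets [measurable]: "ev2 M X N x n \<in> sets M"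
  unfolding ev2_def by measurable

lemma events_sets [measurable]: "ev M N n \<in> sets M" "ev M X x \<in> sets M"
  unfolding ev_def by measurable

lemma cell_prob_nonneg: "q x n \<ge> 0"
  by (simp add: cell_prob_def)

lemma integral_cells:
  fixes g :: "real \<Rightarrow> 'n \<Rightarrow> real"
  assumes Z: "integrable M Z" and f: "\<And>\<omega>. \<omega> \<in> space M \<Longrightarrow> f \<omega> = g (X \<omega>) (N \<omega>) * Z \<omega>"
  shows "integral\<^sup>L M f = (\<Sum>n\<in>UNIV. g 0 n * cell_integral M X Z N 0 n + g 1 n * cell_integral M X Z N 1 n)"
proof -
  have f_cells: "f \<omega> = (\<Sum>n\<in>UNIV. g 0 n * (indicator (ev2 M X N 0 n) \<omega> * Z \<omega>)
                                + g 1 n * (indicator (ev2 M X N 1 n) \<omega> * Z \<omega>))"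
    if "\<omega> \<in> space M" for \<omega>
  proof -
    have "(\<Sum>n\<in>UNIV. g 0 n * (indicator (ev2 M X N 0 n) \<omega> * Z \<omega>)
                    + g 1 n * (indicator (ev2 M X N 1 n) \<omega> * Z \<omega>))
        = (\<Sum>n\<in>UNIV. if n = N \<omega> then g (X \<omega>) n * Z \<omega> else 0)"
      using X_binary[OF that] that by (intro sum.cong) (auto simp: ev2_def)
    then show ?thesis using f[OF that] by simp
  qed
  have "integrable M (\<lambda>\<omega>. indicator (ev2 M X N x n) \<omega> * Z \<omega>)" for x n
    using integrable_mult_indicator[OF cell_sets Z] by simp
  then show ?thesis
    by (simp add: Bochner_Integration.integral_cong[OF refl f_cells] cell_integral_def)
qed

lemma cell_integral_one: "cell_integral M X (\<lambda>_. 1) N x n = q x n"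
  by (simp add: cell_integral_def cell_prob_def)

lemma integral_fun_cells:
  fixes g :: "real \<Rightarrow> 'n \<Rightarrow> real"
  assumes "\<And>\<omega>. \<omega> \<in> space M \<Longrightarrow> f \<omega> = g (X \<omega>) (N \<omega>)"
  shows "integral\<^sup>L M f = (\<Sum>n\<in>UNIV. g 0 n * q 0 n + g 1 n * q 1 n)"
  using integral_cells[of "\<lambda>_. 1" f g] assms by (simp add: cell_integral_one)

lemma integral_fun_cells_Y:
  fixes g :: "real \<Rightarrow> 'n \<Rightarrow> real"
  assumes "\<And>\<omega>. \<omega> \<in> space M \<Longrightarrow> f \<omega> = g (X \<omega>) (N \<omega>) * Y \<omega>"
  shows "integral\<^sup>L M f = (\<Sum>n\<in>UNIV. g 0 n * s 0 n + g 1 n * s 1 n)"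
  using integral_cells[OF Y_integrable] assms .

lemma sum_cells: "(\<Sum>n\<in>UNIV. q 0 n + q 1 n) = 1"
  using integral_fun_cells[of "\<lambda>_. 1" "\<lambda>_ _. 1"] by (simp add: prob_space)

lemma integrals_event_N:
  "(\<integral>\<omega>. indicator (ev M N n) \<omega> * X \<omega> \<partial>M) = q 1 n"
  "(\<integral>\<omega>. indicator (ev M N n) \<omega> * Y \<omega> \<partial>M) = s 0 n + s 1 n"
  "measure M (ev M N n) = q 0 n + q 1 n"
proof -
  have "(\<integral>\<omega>. indicator (ev M N n) \<omega> * X \<omega> \<partial>M)
      = (\<Sum>m\<in>UNIV. of_bool (m = n) * 0 * q 0 m + of_bool (m = n) * 1 * q 1 m)"
    by (rule integral_fun_cells) (auto simp: ev_def dest: X_binary)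
  then show "(\<integral>\<omega>. indicator (ev M N n) \<omega> * X \<omega> \<partial>M) = q 1 n"
    by simp
  have "(\<integral>\<omega>. indicator (ev M N n) \<omega> * Y \<omega> \<partial>M)
      = (\<Sum>m\<in>UNIV. of_bool (m = n) * s 0 m + of_bool (m = n) * s 1 m)"
    by (rule integral_fun_cells_Y) (auto simp: ev_def)
  then show "(\<integral>\<omega>. indicator (ev M N n) \<omega> * Y \<omega> \<partial>M) = s 0 n + s 1 n"
    by (simp add: sum.distrib)
  have "measure M (ev M N n) = (\<integral>\<omega>. indicator (ev M N n) \<omega> \<partial>M)"
    by (simp add: ev_def)
  also have "\<dots> = (\<Sum>m\<in>UNIV. of_bool (m = n) * q 0 m + of_bool (m = n) * q 1 m)"
    by (rule integral_fun_cells) (auto simp: ev_def)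
  finally show "measure M (ev M N n) = q 0 n + q 1 n"
    by (simp add: sum.distrib)
qed

lemma pN_eq: "pN M N n = q 0 n + q 1 n"
  by (simp add: pN_def integrals_event_N)

lemma cN_X_eq: "cN M X N n = q 1 n / pN M N n"
  by (simp add: cN_def condE_def pN_def integrals_event_N)

lemma cN_Y_eq: "cN M Y N n = (s 0 n + s 1 n) / pN M N n"
  by (simp add: cN_def condE_def pN_def integrals_event_N)

lemma cN_X_mult_pN: "cN M X N n * pN M N n = q 1 n"
  using condE_mult_measure[of "ev M N n" X] by (simp add: cN_def pN_def integrals_event_N)

lemma cN_Y_mult_pN: "cN M Y N n * pN M N n = s 0 n + s 1 n"
  using condE_mult_measure[of "ev M N n" Y] by (simp add: cN_def pN_def integrals_event_N)

lemma expect_fun_N: "expect M (\<lambda>\<omega>. h (N \<omega>)) = (\<Sum>n\<in>UNIV. h n * pN M N n)"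
proof -
  have "expect M (\<lambda>\<omega>. h (N \<omega>)) = (\<Sum>n\<in>UNIV. h n * q 0 n + h n * q 1 n)"
    unfolding expect_def by (rule integral_fun_cells) simp
  then show ?thesis by (simp add: pN_eq distrib_left)
qed

lemma expect_X: "expect M X = (\<Sum>n\<in>UNIV. q 1 n)"
proof -
  have "expect M X = (\<Sum>n\<in>UNIV. 0 * q 0 n + 1 * q 1 n)"
    unfolding expect_def by (rule integral_fun_cells) (auto dest: X_binary)
  then show ?thesis by simp
qed

lemma expect_Y: "expect M Y = (\<Sum>n\<in>UNIV. s 0 n + s 1 n)"
proof -
  have "expect M Y = (\<Sum>n\<in>UNIV. 1 * s 0 n + 1 * s 1 n)"
    unfolding expect_def by (rule integral_fun_cells_Y) simp
  then show ?thesis by simp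
qed

lemma var_X: "var M X = expect M X * (1 - expect M X)"
proof -
  let ?p = "expect M X"
  have "var M X = (\<Sum>n\<in>UNIV. (0 - ?p)\<^sup>2 * q 0 n + (1 - ?p)\<^sup>2 * q 1 n)"
    unfolding var_def expect_def[of M "\<lambda>\<omega>. (X \<omega> - ?p)\<^sup>2"]
    by (rule integral_fun_cells) (auto dest: X_binary)
  also have "\<dots> = ?p\<^sup>2 * (1 - ?p) + (1 - ?p)\<^sup>2 * ?p"
    using sum_cells by (simp add: sum.distrib sum_distrib_left[symmetric] expect_X)
  finally show ?thesis by (simp add: power2_eq_square algebra_simps)
qed

lemma integral_event_X:
  assumes "x \<in> {0, 1}"
  shows "(\<integral>\<omega>. indicator (ev M X x) \<omega> * h (N \<omega>) \<partial>M) = (\<Sum>n\<in>UNIV. h n * q x n)"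
proof -
  have "(\<integral>\<omega>. indicator (ev M X x) \<omega> * h (N \<omega>) \<partial>M)
      = (\<Sum>n\<in>UNIV. of_bool (0 = x) * h n * q 0 n + of_bool (1 = x) * h n * q 1 n)"
    by (rule integral_fun_cells[where g = "\<lambda>x' n. of_bool (x' = x) * h n"])
      (auto simp: ev_def dest: X_binary)
  then show ?thesis using assms by auto
qed

lemma integral_event_X_Y:
  assumes "x \<in> {0, 1}"
  shows "(\<integral>\<omega>. indicator (ev M X x) \<omega> * (Y \<omega> * h (N \<omega>)) \<partial>M) = (\<Sum>n\<in>UNIV. h n * s x n)"
proof -
  have "(\<integral>\<omega>. indicator (ev M X x) \<omega> * (Y \<omega> * h (N \<omega>)) \<partial>M)
      = (\<Sum>n\<in>UNIV. of_bool (0 = x) * h n * s 0 n + of_bool (1 = x) * h n * s 1 n)"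
    by (rule integral_fun_cells_Y[where g = "\<lambda>x' n. of_bool (x' = x) * h n"])
      (auto simp: ev_def dest: X_binary)
  then show ?thesis using assms by auto
qed

lemma measure_event_X: "x \<in> {0, 1} \<Longrightarrow> measure M (ev M X x) = (\<Sum>n\<in>UNIV. q x n)"
  using integral_event_X[of x "\<lambda>_. 1"] by simp

lemma Dpar_cells:
  assumes "0 < expect M X" "expect M X < 1"
  shows "Dpar M X Y = ((\<Sum>n\<in>UNIV. s 1 n) - expect M X * expect M Y) / var M X"
proof -
  have "Dpar M X Y = (\<Sum>n\<in>UNIV. s 1 n) / expect M X - (\<Sum>n\<in>UNIV. s 0 n) / (1 - expect M X)"
    using integral_event_X_Y[of 1 "\<lambda>_. 1"] integral_event_X_Y[of 0 "\<lambda>_. 1"]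
      measure_event_X[of 1] measure_event_X[of 0] sum_cells
    by (simp add: Dpar_def condE_def expect_X sum.distrib)
  then show ?thesis
    using assms by (simp add: var_X expect_Y sum.distrib field_simps)
qed

lemma expect_rvN_X: "expect M (rvN M X N) = expect M X"
  using expect_fun_N[of "cN M X N"] by (simp add: rvN_def[abs_def] cN_X_mult_pN expect_X)

lemma expect_rvN_Y: "expect M (rvN M Y N) = expect M Y"
  using expect_fun_N[of "cN M Y N"] by (simp add: rvN_def[abs_def] cN_Y_mult_pN expect_Y)

lemma cov_rvN_cells:
  "cov M (rvN M Y N) (rvN M X N)
     = (\<Sum>n\<in>UNIV. cN M X N n * (s 0 n + s 1 n)) - expect M X * expect M Y"
proof -
  have "(\<Sum>n\<in>UNIV. pN M N n) = 1"
    using sum_cells by (simp add: pN_eq)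
  then have "cov M (rvN M Y N) (rvN M X N)
      = (\<Sum>n\<in>UNIV. cN M Y N n * cN M X N n * pN M N n)
        - (\<Sum>n\<in>UNIV. cN M Y N n * pN M N n) * (\<Sum>n\<in>UNIV. cN M X N n * pN M N n)"
    using expect_fun_N[of "\<lambda>n. (cN M Y N n - expect M Y) * (cN M X N n - expect M X)"]
      expect_rvN_X expect_rvN_Y expect_fun_N[of "cN M X N"] expect_fun_N[of "cN M Y N"]
    by (simp add: cov_def rvN_def[abs_def] sum_weighted_covariance[of "pN M N"])
  moreover have "cN M Y N n * cN M X N n * pN M N n = cN M X N n * (s 0 n + s 1 n)" for n
    by (simp flip: cN_Y_mult_pN)
  ultimately show ?thesis
    by (simp add: cN_Y_mult_pN cN_X_mult_pN expect_X expect_Y)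
qed

lemma var_rvN_X_cells:
  "var M (rvN M X N) = (\<Sum>n\<in>UNIV. cN M X N n * q 1 n) - (expect M X)\<^sup>2"
proof -
  have "(\<Sum>n\<in>UNIV. pN M N n) = 1"
    using sum_cells by (simp add: pN_eq)
  then have "var M (rvN M X N)
      = (\<Sum>n\<in>UNIV. cN M X N n * cN M X N n * pN M N n)
        - (\<Sum>n\<in>UNIV. cN M X N n * pN M N n) * (\<Sum>n\<in>UNIV. cN M X N n * pN M N n)"
    using expect_fun_N[of "\<lambda>n. (cN M X N n - expect M X) * (cN M X N n - expect M X)"]
      expect_rvN_X expect_fun_N[of "cN M X N"]
    by (simp add: var_def power2_eq_square rvN_def[abs_def] sum_weighted_covariance[of "pN M N"])
  moreover have "cN M X N n * cN M X N n * pN M N n = cN M X N n * q 1 n" for n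
    by (simp flip: cN_X_mult_pN)
  ultimately show ?thesis
    by (simp add: cN_X_mult_pN expect_X power2_eq_square)
qed

lemma measure_mult_condCov_event_X:
  assumes "x \<in> {0, 1}" "(\<Sum>n\<in>UNIV. q x n) \<noteq> 0"
  shows "measure M (ev M X x) * condCov M Y (rvN M X N) (ev M X x)
       = (\<Sum>n\<in>UNIV. cN M X N n * s x n)
         - (\<Sum>n\<in>UNIV. s x n) * (\<Sum>n\<in>UNIV. cN M X N n * q x n) / (\<Sum>n\<in>UNIV. q x n)"
  using assms integral_event_X_Y[OF assms(1), of "cN M X N"] integral_event_X_Y[OF assms(1), of "\<lambda>_. 1"]
    integral_event_X[OF assms(1), of "cN M X N"]
  by (simp add: condCov_def condE_def rvN_def measure_event_X field_simps)

theorem deltaW_eq_cov_minus_Dpar_var: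
  assumes "0 < expect M X" "expect M X < 1"
  shows "deltaW M X Y N = cov M (rvN M Y N) (rvN M X N) - Dpar M X Y * var M (rvN M X N)"
proof -
  let ?p = "expect M X" and ?a = "cN M X N"
  have q0: "(\<Sum>n\<in>UNIV. q 0 n) = 1 - ?p"
    using sum_cells by (simp add: sum.distrib expect_X)
  have aq0: "(\<Sum>n\<in>UNIV. ?a n * q 0 n) = ?p - (\<Sum>n\<in>UNIV. ?a n * q 1 n)"
  proof -
    have "?a n * q 0 n = q 1 n - ?a n * q 1 n" for n
      by (metis cN_X_mult_pN add_diff_cancel_right' distrib_left pN_eq)
    then show ?thesis by (simp add: expect_X sum_subtractf)
  qed
  have s0: "(\<Sum>n\<in>UNIV. s 0 n) = expect M Y - (\<Sum>n\<in>UNIV. s 1 n)"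
    by (simp add: expect_Y sum.distrib)
  have "deltaW M X Y N
      = (\<Sum>n\<in>UNIV. ?a n * s 0 n) - (\<Sum>n\<in>UNIV. s 0 n) * (\<Sum>n\<in>UNIV. ?a n * q 0 n) / (1 - ?p)
        + ((\<Sum>n\<in>UNIV. ?a n * s 1 n) - (\<Sum>n\<in>UNIV. s 1 n) * (\<Sum>n\<in>UNIV. ?a n * q 1 n) / ?p)"
    using assms measure_mult_condCov_event_X[of 0] measure_mult_condCov_event_X[of 1] q0
    by (simp add: deltaW_def expect_X)
  moreover have "(\<Sum>n\<in>UNIV. ?a n * (s 0 n + s 1 n))
      = (\<Sum>n\<in>UNIV. ?a n * s 0 n) + (\<Sum>n\<in>UNIV. ?a n * s 1 n)"
    by (simp add: distrib_left sum.distrib)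
  ultimately show ?thesis
    using assms unfolding cov_rvN_cells var_rvN_X_cells Dpar_cells[OF assms] var_X aq0 s0
    by (simp add: field_simps power2_eq_square)
qed

lemma min_mult_pN: "min u v * pN M N n = min (u * pN M N n) (v * pN M N n)"
  by (simp add: min_mult_distrib_right pN_def)

lemma D_MOB_plus_cells:
  "D_MOB_plus M X Y N ylo yhi
     = ((\<Sum>n\<in>UNIV. min (s 0 n + s 1 n - ylo * q 0 n) (yhi * q 1 n)) - expect M X * expect M Y)
       / var M X"
proof -
  have "min (cN M Y N n - ylo * (1 - cN M X N n)) (yhi * cN M X N n) * pN M N n
      = min (s 0 n + s 1 n - ylo * q 0 n) (yhi * q 1 n)" for n
  proof -
    have "(cN M Y N n - ylo * (1 - cN M X N n)) * pN M N n
        = cN M Y N n * pN M N n - ylo * pN M N n + ylo * (cN M X N n * pN M N n)"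
      by (simp add: algebra_simps)
    also have "\<dots> = s 0 n + s 1 n - ylo * q 0 n"
      by (simp only: cN_X_mult_pN cN_Y_mult_pN) (simp add: pN_eq algebra_simps)
    moreover have "yhi * cN M X N n * pN M N n = yhi * q 1 n"
      by (simp only: mult.assoc cN_X_mult_pN)
    ultimately show ?thesis
      by (simp only: min_mult_pN)
  qed
  then show ?thesis
    using expect_fun_N[of "\<lambda>n. min (cN M Y N n - ylo * (1 - cN M X N n)) (yhi * cN M X N n)"]
    by (simp add: D_MOB_plus_def rvN_def)
qed

lemma D_MOB_minus_cells:
  "D_MOB_minus M X Y N ylo yhi
     = ((\<Sum>n\<in>UNIV. max (s 0 n + s 1 n - yhi * q 0 n) (ylo * q 1 n)) - expect M X * expect M Y)
       / var M X"
proof -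
  have "min (cN M Y N n - ylo * cN M X N n) (yhi * (1 - cN M X N n)) * pN M N n
      = s 0 n + s 1 n - max (s 0 n + s 1 n - yhi * q 0 n) (ylo * q 1 n)" for n
  proof -
    have "(cN M Y N n - ylo * cN M X N n) * pN M N n
        = cN M Y N n * pN M N n - ylo * (cN M X N n * pN M N n)"
      by (simp add: algebra_simps)
    also have "\<dots> = s 0 n + s 1 n - ylo * q 1 n"
      by (simp only: cN_X_mult_pN cN_Y_mult_pN)
    moreover have "yhi * (1 - cN M X N n) * pN M N n = yhi * pN M N n - yhi * (cN M X N n * pN M N n)"
      by (simp add: algebra_simps)
    moreover have "\<dots> = yhi * q 0 n"
      by (simp only: cN_X_mult_pN) (simp add: pN_eq algebra_simps)
    ultimately show ?thesis
      by (simp only: min_mult_pN)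
  qed
  then have "expect M (\<lambda>\<omega>. min (rvN M Y N \<omega> - ylo * rvN M X N \<omega>) (yhi * (1 - rvN M X N \<omega>)))
      = expect M Y - (\<Sum>n\<in>UNIV. max (s 0 n + s 1 n - yhi * q 0 n) (ylo * q 1 n))"
    using expect_fun_N[of "\<lambda>n. min (cN M Y N n - ylo * cN M X N n) (yhi * (1 - cN M X N n))"]
    by (simp add: rvN_def expect_Y sum_subtractf)
  then show ?thesis
    by (simp add: D_MOB_minus_def algebra_simps)
qed

lemma cell_integral_eq_condE: "s x n = condE M Y (ev2 M X N x n) * q x n"
  by (simp add: condE_mult_measure cell_integral_def cell_prob_def)

lemma standing_iff:
  "standing M X Y N ylo yhi \<longleftrightarrow>
     (\<exists>n. pN M N n > 0 \<and> 0 < cN M X N n \<and> cN M X N n < 1) \<and> ylo \<le> yhi \<and>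
     (\<forall>x\<in>{0, 1}. \<forall>n. ylo * q x n \<le> s x n \<and> s x n \<le> yhi * q x n)"
proof -
  have "(q x n > 0 \<longrightarrow> condE M Y (ev2 M X N x n) \<in> {ylo..yhi})
      \<longleftrightarrow> ylo * q x n \<le> s x n \<and> s x n \<le> yhi * q x n" for x n
    using cell_prob_nonneg[of x n]
    by (cases "q x n = 0") (auto simp: cell_integral_eq_condE)
  then show ?thesis
    using prob_space_axioms X_measurable X_binary Y_integrable N_measurable
    by (auto simp: standing_def cell_prob_def)
qed

lemma standing_cell_bounds:
  assumes "standing M X Y N ylo yhi" "x \<in> {0, 1}"
  shows "ylo * q x n \<le> s x n \<and> s x n \<le> yhi * q x n"
  using assms by (auto simp: standing_iff)

lemma expect_X_strictly_between:
  assumes "standing M X Y N ylo yhi"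
  shows "0 < expect M X \<and> expect M X < 1"
proof -
  obtain n where n: "pN M N n > 0" "0 < cN M X N n" "cN M X N n < 1"
    using assms by (auto simp: standing_iff)
  then have "0 < q 1 n" "0 < q 0 n"
    by (simp_all add: cN_X_eq pN_eq zero_less_divide_iff divide_less_eq)
  moreover have "q 1 n \<le> (\<Sum>m\<in>UNIV. q 1 m)" "q 0 n \<le> (\<Sum>m\<in>UNIV. q 0 m)"
    by (simp_all add: member_le_sum cell_prob_nonneg)
  ultimately show ?thesis
    using sum_cells by (simp add: expect_X sum.distrib)
qed

theorem Dpar_between_MOB_bounds:
  assumes "standing M X Y N ylo yhi"
  shows "D_MOB_minus M X Y N ylo yhi \<le> Dpar M X Y \<and> Dpar M X Y \<le> D_MOB_plus M X Y N ylo yhi"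
proof -
  have p: "0 < expect M X" "expect M X < 1"
    using expect_X_strictly_between[OF assms] by auto
  have "max (s 0 n + s 1 n - yhi * q 0 n) (ylo * q 1 n) \<le> s 1 n"
    "s 1 n \<le> min (s 0 n + s 1 n - ylo * q 0 n) (yhi * q 1 n)" for n
    using standing_cell_bounds[OF assms, of 0 n] standing_cell_bounds[OF assms, of 1 n] by auto
  then have "(\<Sum>n\<in>UNIV. max (s 0 n + s 1 n - yhi * q 0 n) (ylo * q 1 n)) \<le> (\<Sum>n\<in>UNIV. s 1 n)"
    "(\<Sum>n\<in>UNIV. s 1 n) \<le> (\<Sum>n\<in>UNIV. min (s 0 n + s 1 n - ylo * q 0 n) (yhi * q 1 n))"
    by (simp_all add: sum_mono)
  moreover have "var M X > 0"
    using p by (simp add: var_X)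
  ultimately show ?thesis
    unfolding Dpar_cells[OF p] D_MOB_plus_cells D_MOB_minus_cells by (simp add: divide_right_mono)
qed

definition replace_Y :: "(real \<Rightarrow> 'n \<Rightarrow> real) \<Rightarrow> 'a \<Rightarrow> real \<times> real \<times> 'n" where
  "replace_Y G \<omega> = (X \<omega>, if X \<omega> = 1 then G 1 (N \<omega>) else G 0 (N \<omega>), N \<omega>)"

lemma replace_Y_measurable [measurable]: "replace_Y G \<in> measurable M canonical_space"
  unfolding replace_Y_def by measurable

lemma binary_triple_replace_Y:
  "binary_triple (distr M canonical_space (replace_Y G)) coord_X coord_Y coord_N"
proof -
  have "\<bar>coord_Y (replace_Y G \<omega>)\<bar> \<le> (\<Sum>n\<in>UNIV. \<bar>G 0 n\<bar> + \<bar>G 1 n\<bar>)" for \<omega>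
    by (rule order_trans[OF _ member_le_sum[of "N \<omega>"]]) (auto simp: coord_Y_def replace_Y_def)
  then have "integrable M (\<lambda>\<omega>. coord_Y (replace_Y G \<omega>))"
    by (intro integrable_const_bound[where B = "\<Sum>n\<in>UNIV. \<bar>G 0 n\<bar> + \<bar>G 1 n\<bar>"]) simp_all
  then show ?thesis
    using prob_space_distr[OF replace_Y_measurable]
    by (simp add: binary_triple_def binary_triple_axioms_def coord_X_def integrable_distr_eq)
qed

lemma cells_replace_Y:
  fixes G :: "real \<Rightarrow> 'n \<Rightarrow> real"
  assumes x: "x \<in> {0, 1}"
  defines "M' \<equiv> distr M canonical_space (replace_Y G)"
  shows "cell_prob M' coord_X coord_N x n = q x n"
    and "cell_integral M' coord_X coord_Y coord_N x n = G x n * q x n"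
proof -
  have cell_sets': "ev2 M' coord_X coord_N x n \<in> sets canonical_space"
    unfolding ev2_def M'_def space_distr by measurable
  have preimage: "replace_Y G -` ev2 M' coord_X coord_N x n \<inter> space M = ev2 M X N x n"
    using x X_binary
    by (auto simp: ev2_def replace_Y_def coord_X_def coord_N_def M'_def space_pair_measure)
  show "cell_prob M' coord_X coord_N x n = q x n"
    using measure_distr[OF replace_Y_measurable[of G] cell_sets']
    by (simp add: cell_prob_def preimage flip: M'_def)
  have "(\<lambda>v. indicator (ev2 M' coord_X coord_N x n) v * coord_Y v) \<in> borel_measurable canonical_space"
    using cell_sets' by measurable
  then have "cell_integral M' coord_X coord_Y coord_N x n
      = (\<integral>\<omega>. indicator (ev2 M' coord_X coord_N x n) (replace_Y G \<omega>) * coord_Y (replace_Y G \<omega>) \<partial>M)"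
    unfolding cell_integral_def M'_def by (rule integral_distr[OF replace_Y_measurable[of G]])
  also have "\<dots> = (\<integral>\<omega>. G x n * indicator (ev2 M X N x n) \<omega> \<partial>M)"
  proof (intro Bochner_Integration.integral_cong refl)
    fix \<omega> assume "\<omega> \<in> space M"
    then have "replace_Y G \<omega> \<in> ev2 M' coord_X coord_N x n \<longleftrightarrow> \<omega> \<in> ev2 M X N x n"
      using preimage by blast
    moreover have "\<omega> \<in> ev2 M X N x n \<Longrightarrow> coord_Y (replace_Y G \<omega>) = G x n"
      using x by (auto simp: ev2_def coord_Y_def replace_Y_def)
    ultimately show "indicator (ev2 M' coord_X coord_N x n) (replace_Y G \<omega>) * coord_Y (replace_Y G \<omega>)
        = G x n * indicator (ev2 M X N x n) \<omega>"
      by (cases "\<omega> \<in> ev2 M X N x n") simp_all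
  qed
  finally show "cell_integral M' coord_X coord_Y coord_N x n = G x n * q x n"
    by (simp add: cell_prob_def)
qed

lemma realize_cell_integrals:
  fixes w :: "real \<Rightarrow> 'n \<Rightarrow> real"
  assumes "\<And>x n. x \<in> {0, 1} \<Longrightarrow> q x n = 0 \<Longrightarrow> w x n = 0"
  shows "\<exists>(M' :: (real \<times> real \<times> 'n) measure) X' Y' N'. binary_triple M' X' Y' N' \<and>
     (\<forall>x\<in>{0, 1}. \<forall>n. cell_prob M' X' N' x n = q x n \<and> cell_integral M' X' Y' N' x n = w x n)"
proof -
  define G where "G x n = w x n / q x n" for x n
  have "G x n * q x n = w x n" if "x \<in> {0, 1}" for x n
    using assms[OF that] by (cases "q x n = 0") (simp_all add: G_def)
  then show ?thesis
    using binary_triple_replace_Y[of G] cells_replace_Y[of _ G]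
    by (intro exI[of _ "distr M canonical_space (replace_Y G)"] exI[of _ coord_X] exI[of _ coord_Y]
        exI[of _ coord_N]) simp
qed

end

lemma standing_imp_binary_triple: "standing M X Y N ylo yhi \<Longrightarrow> binary_triple M X Y N"
  by (auto simp: standing_def binary_triple_def binary_triple_axioms_def)

lemma same_obs_of_cells:
  assumes "binary_triple M X Y N" "binary_triple M' X' Y' N'"
    and "\<And>x n. x \<in> {0, 1} \<Longrightarrow> cell_prob M' X' N' x n = cell_prob M X N x n"
    and "\<And>n. cell_integral M' X' Y' N' 0 n + cell_integral M' X' Y' N' 1 n
             = cell_integral M X Y N 0 n + cell_integral M X Y N 1 n"
  shows "same_obs M X Y N M' X' Y' N'"
  using assms binary_triple.pN_eq[OF assms(1)] binary_triple.pN_eq[OF assms(2)]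
    binary_triple.cN_X_eq[OF assms(1)] binary_triple.cN_X_eq[OF assms(2)]
    binary_triple.cN_Y_eq[OF assms(1)] binary_triple.cN_Y_eq[OF assms(2)]
  by (simp add: same_obs_def)

lemma same_obs_cov_var:
  assumes "binary_triple M X Y N" "binary_triple M' X' Y' N'" "same_obs M X Y N M' X' Y' N'"
  shows "cov M' (rvN M' Y' N') (rvN M' X' N') = cov M (rvN M Y N) (rvN M X N)"
    and "var M' (rvN M' X' N') = var M (rvN M X N)"
proof -
  have E: "expect M' (\<lambda>\<omega>. h (N' \<omega>)) = expect M (\<lambda>\<omega>. h (N \<omega>))" for h
    using assms by (simp add: binary_triple.expect_fun_N same_obs_def)
  have "rvN M' Z' N' = (\<lambda>\<omega>. cN M' Z' N' (N' \<omega>))" "rvN M Z N = (\<lambda>\<omega>. cN M Z N (N \<omega>))" for Z Z'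
    by (simp_all add: rvN_def[abs_def])
  moreover have "cN M' X' N' = cN M X N" "cN M' Y' N' = cN M Y N"
    using assms(3) by (simp_all add: same_obs_def fun_eq_iff)
  ultimately show "cov M' (rvN M' Y' N') (rvN M' X' N') = cov M (rvN M Y N) (rvN M X N)"
    "var M' (rvN M' X' N') = var M (rvN M X N)"
    using E[of "cN M X N"] E[of "cN M Y N"]
      E[of "\<lambda>n. (cN M Y N n - expect M (rvN M Y N)) * (cN M X N n - expect M (rvN M X N))"]
      E[of "\<lambda>n. (cN M X N n - expect M (rvN M X N))\<^sup>2"]
    by (simp_all add: cov_def var_def)
qed

theorem (in binary_triple) exists_model_with_Dpar:
  assumes std: "standing M X Y N ylo yhi"
    and d: "D_MOB_minus M X Y N ylo yhi \<le> d" "d \<le> D_MOB_plus M X Y N ylo yhi"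
  shows "\<exists>(M' :: (real \<times> real \<times> 'n) measure) X' Y' N'.
           standing M' X' Y' N' ylo yhi \<and> same_obs M X Y N M' X' Y' N' \<and> Dpar M' X' Y' = d \<and>
           deltaW M' X' Y' N' = cov M (rvN M Y N) (rvN M X N) - d * var M (rvN M X N)"
proof -
  have p: "0 < expect M X" "expect M X < 1"
    using expect_X_strictly_between[OF std] by auto
  then have V: "var M X > 0"
    by (simp add: var_X)
  define l where "l n = max (s 0 n + s 1 n - yhi * q 0 n) (ylo * q 1 n)" for n
  define u where "u n = min (s 0 n + s 1 n - ylo * q 0 n) (yhi * q 1 n)" for n
  define T where "T = d * var M X + expect M X * expect M Y"
  have "l n \<le> u n" for n
    using standing_cell_bounds[OF std, of 0 n] standing_cell_bounds[OF std, of 1 n]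
    by (auto simp: l_def u_def)
  moreover have "sum l UNIV \<le> T" "T \<le> sum u UNIV"
    using d V unfolding D_MOB_minus_cells D_MOB_plus_cells l_def[symmetric] u_def[symmetric] T_def
    by (simp_all add: divide_le_eq le_divide_eq algebra_simps)
  ultimately obtain w1 where w1: "\<And>n. l n \<le> w1 n \<and> w1 n \<le> u n" and sum_w1: "sum w1 UNIV = T"
    by (rule sum_interpolate) blast+
  define w where "w (x :: real) n = (if x = 1 then w1 n else s 0 n + s 1 n - w1 n)" for x n
  have w_bounds: "ylo * q x n \<le> w x n \<and> w x n \<le> yhi * q x n" if "x \<in> {0, 1}" for x n
    using that w1[of n] unfolding l_def u_def max.bounded_iff min.bounded_iff
    by (elim insertE) (simp_all add: w_def)
  have "w x n = 0" if "x \<in> {0, 1}" "q x n = 0" for x n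
    using w_bounds[OF that(1), of n] that(2) by simp
  then obtain M' :: "(real \<times> real \<times> 'n) measure" and X' Y' N' where
    triple': "binary_triple M' X' Y' N'" and
    cells': "\<forall>x\<in>{0, 1}. \<forall>n. cell_prob M' X' N' x n = q x n \<and> cell_integral M' X' Y' N' x n = w x n"
    using realize_cell_integrals by blast
  interpret M': binary_triple M' X' Y' N'
    by (rule triple')
  have obs: "same_obs M X Y N M' X' Y' N'"
    using cells' by (intro same_obs_of_cells[OF binary_triple_axioms triple']) (auto simp: w_def)
  have std': "standing M' X' Y' N' ylo yhi"
    using std obs cells' w_bounds by (simp add: standing_iff M'.standing_iff same_obs_def)
  have EX': "expect M' X' = expect M X" and EY': "expect M' Y' = expect M Y"
    using cells' by (simp_all add: M'.expect_X M'.expect_Y expect_X expect_Y w_def)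
  have p': "0 < expect M' X'" "expect M' X' < 1"
    using p EX' by simp_all
  have Dpar': "Dpar M' X' Y' = d"
    using cells' p sum_w1 by (simp add: M'.Dpar_cells[OF p'] M'.var_X var_X EX' EY' w_def T_def)
  have "deltaW M' X' Y' N' = cov M (rvN M Y N) (rvN M X N) - d * var M (rvN M X N)"
    using same_obs_cov_var[OF binary_triple_axioms triple' obs]
    by (simp add: M'.deltaW_eq_cov_minus_Dpar_var[OF p'] Dpar')
  then show ?thesis
    using std' obs Dpar' by blast
qed

theorem proposition5:
  fixes M :: "'a measure" and X Y :: "'a \<Rightarrow> real" and N :: "'a \<Rightarrow> 'n::finite"
    and ylo yhi :: real
  assumes std: "standing M X Y N ylo yhi"
    and varpos: "var M (rvN M X N) > 0"
  shows
    "(deltaW M X Y N \<ge> 0 \<longrightarrow>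
        Dpar M X Y \<in> {D_MOB_minus M X Y N ylo yhi ..
                        min (D_MOB_plus M X Y N ylo yhi) (D_ER M X Y N)}
      \<and> (\<forall>d \<in> {D_MOB_minus M X Y N ylo yhi ..
                 min (D_MOB_plus M X Y N ylo yhi) (D_ER M X Y N)}.
           \<exists>(M' :: (real \<times> real \<times> 'n) measure) X' Y' N'.
              standing M' X' Y' N' ylo yhi \<and> same_obs M X Y N M' X' Y' N' \<and>
              deltaW M' X' Y' N' \<ge> 0 \<and> Dpar M' X' Y' = d))
   \<and> (deltaW M X Y N \<le> 0 \<longrightarrow>
        Dpar M X Y \<in> {max (D_MOB_minus M X Y N ylo yhi) (D_ER M X Y N) ..
                        D_MOB_plus M X Y N ylo yhi}
      \<and> (\<forall>d \<in> {max (D_MOB_minus M X Y N ylo yhi) (D_ER M X Y N) ..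
                 D_MOB_plus M X Y N ylo yhi}.
           \<exists>(M' :: (real \<times> real \<times> 'n) measure) X' Y' N'.
              standing M' X' Y' N' ylo yhi \<and> same_obs M X Y N M' X' Y' N' \<and>
              deltaW M' X' Y' N' \<le> 0 \<and> Dpar M' X' Y' = d))"
proof -
  interpret binary_triple M X Y N
    using std by (rule standing_imp_binary_triple)
  let ?cov = "cov M (rvN M Y N) (rvN M X N)" and ?var = "var M (rvN M X N)"
  have sign: "d * ?var \<le> ?cov \<longleftrightarrow> d \<le> D_ER M X Y N" "?cov \<le> d * ?var \<longleftrightarrow> D_ER M X Y N \<le> d"
    for d
    using varpos by (simp_all add: D_ER_def le_divide_eq divide_le_eq algebra_simps)
  have deltaW: "deltaW M X Y N = ?cov - Dpar M X Y * ?var"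
    using expect_X_strictly_between[OF std] by (simp add: deltaW_eq_cov_minus_Dpar_var)
  have sharp: "\<exists>(M' :: (real \<times> real \<times> 'n) measure) X' Y' N'.
      standing M' X' Y' N' ylo yhi \<and> same_obs M X Y N M' X' Y' N' \<and>
      P (deltaW M' X' Y' N') \<and> Dpar M' X' Y' = d"
    if "d \<in> {D_MOB_minus M X Y N ylo yhi .. D_MOB_plus M X Y N ylo yhi}" "P (?cov - d * ?var)" for d P
    using exists_model_with_Dpar[OF std] that by fastforce
  show ?thesis
    using Dpar_between_MOB_bounds[OF std]
    by (auto simp: deltaW sign intro!: sharp)
qed

end
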